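(* Let $D$ be a square-free integer, let $\mathbb{Z}[\sqrt{D}]$ denote the ring of integers of $\mathbb{Q}(\sqrt{D})$, and let $p$ be a prime integer which is irreducible but not prime in $\mathbb{Z}[\sqrt{D}]$. Let $z\in I_p(D)$. Then (1) $p$ divides $\lVert z\rVert$ in $\mathbb{Z}$, and (2) $\bar{z}\in I_p(D)$. Moreover, for any integer $t\in\mathbb{Z}$, $(\mathbb{Z}\cup R^*\cup tR^* )\cap I_p(D)=\emptyset$, where $R^*=\mathbb{Z}[\sqrt{D}]^{\times}$ is the unit group and $tR^*=\{tu: u\in R^*\}$.
   Context: Here $\mathbb{Z}[\sqrt{D}]=\{a+b\sqrt{D}:a,b\in\mathbb{Z}\}$ if $D\equiv 2,3 \pmod 4$ and $\mathbb{Z}[\sqrt{D}]=\{\frac{a+b\sqrt{D}}{2}:a,b\in\mathbb{Z},\ a\equiv b \pmod 2\}$ if $D\equiv 1\pmod 4$. For $z=x+y\sqrt{D}$ (with $x,y\in\mathbb{Q}$), $\bar z=x-y\sqrt{D}$ is its conjugate and $\lVert z\rVert=z\bar z$ its norm. $\langle a_1,\dots,a_k\rangle$ denotes the ideal generated by $a_1,\dots,a_k$. $I_p(D)$ is the set of all non-unit $z\in\mathbb{Z}[\sqrt{D}]$ such that $z\notin\langle p\rangle$ but there exists $m\in\mathbb{Z}[\sqrt{D}]$ with $m\notin\langle p\rangle$ and $zm\in\langle p\rangle$. *)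

theory Defs
  imports "HOL-Algebra.Ring_Divisibility" "HOL-Algebra.Ideal"
          "HOL-Computational_Algebra.Squarefree"
begin

text \<open>Elements of the quadratic field Q(sqrt D) are represented as pairs (x, y) of
  rationals, standing for x + y sqrt D.\<close>

definition qint_carrier :: "int \<Rightarrow> (rat \<times> rat) set" where
  "qint_carrier D =
     (if D mod 4 = 1
      then {(of_int a / 2, of_int b / 2) | a b :: int. a mod 2 = b mod 2}
      else {(of_int a, of_int b) | a b :: int. True})"

definition ZD :: "int \<Rightarrow> (rat \<times> rat) ring" where
  "ZD D = \<lparr> carrier = qint_carrier D,
            monoid.mult = (\<lambda>(a, b) (c, d). (a * c + of_int D * b * d, a * d + b * c)),
            one = (1, 0),
            zero = (0, 0),
            add = (\<lambda>(a, b) (c, d). (a + c, b + d)) \<rparr>"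

definition qconj :: "rat \<times> rat \<Rightarrow> rat \<times> rat" where
  "qconj z = (fst z, - snd z)"

definition qnorm :: "int \<Rightarrow> rat \<times> rat \<Rightarrow> rat" where
  "qnorm D z = fst z ^ 2 - of_int D * snd z ^ 2"

definition qof_int :: "int \<Rightarrow> rat \<times> rat" where
  "qof_int t = (of_int t, 0)"

definition Ip :: "int \<Rightarrow> int \<Rightarrow> (rat \<times> rat) set" where
  "Ip D p = {z \<in> carrier (ZD D). z \<notin> Units (ZD D) \<and> z \<notin> PIdl\<^bsub>ZD D\<^esub> (qof_int p) \<and>
      (\<exists>m \<in> carrier (ZD D). m \<notin> PIdl\<^bsub>ZD D\<^esub> (qof_int p) \<and>
         z \<otimes>\<^bsub>ZD D\<^esub> m \<in> PIdl\<^bsub>ZD D\<^esub> (qof_int p))}"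

end

theory Submission
  imports Defs
begin

text \<open>The key fact is an integer
  cancellation law for the ideal \<open>(p)\<close>: if \<open>p\<close> does not divide the integer \<open>s\<close> and
  \<open>s m = p w\<close>, then a Bezout relation \<open>u p + v s = 1\<close> gives \<open>m = p (u m + v w) \<in> (p)\<close>.
  Applied to \<open>conj(z) z m = \<parallel>z\<parallel> m\<close> it shows that \<open>p\<close> divides \<open>\<parallel>z\<parallel>\<close>; applied to \<open>s m\<close> and
  \<open>t (u m)\<close> it excludes integers and integer multiples of units from \<open>I\<^sub>p(D)\<close>. Conjugation is
  multiplicative and preserves the carrier, the units and \<open>(p)\<close>, hence maps \<open>I\<^sub>p(D)\<close> into
  itself.\<close>

lemma carrier_ZD: "carrier (ZD D) = qint_carrier D"
  by (simp add: ZD_def)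

lemma one_ZD: "\<one>\<^bsub>ZD D\<^esub> = (1, 0)"
  by (simp add: ZD_def)

lemma mult_ZD:
  "x \<otimes>\<^bsub>ZD D\<^esub> y = (fst x * fst y + of_int D * snd x * snd y, fst x * snd y + snd x * fst y)"
  by (cases x, cases y) (simp add: ZD_def)

lemma mult_ZD_assoc: "(x \<otimes>\<^bsub>ZD D\<^esub> y) \<otimes>\<^bsub>ZD D\<^esub> z = x \<otimes>\<^bsub>ZD D\<^esub> (y \<otimes>\<^bsub>ZD D\<^esub> z)"
  by (simp add: mult_ZD algebra_simps)

lemma mult_ZD_commute: "x \<otimes>\<^bsub>ZD D\<^esub> y = y \<otimes>\<^bsub>ZD D\<^esub> x"
  by (simp add: mult_ZD algebra_simps)

lemma one_mult_ZD: "\<one>\<^bsub>ZD D\<^esub> \<otimes>\<^bsub>ZD D\<^esub> x = x"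
  by (simp add: one_ZD mult_ZD)

lemma qof_int_mult_ZD: "qof_int s \<otimes>\<^bsub>ZD D\<^esub> x = (of_int s * fst x, of_int s * snd x)"
  by (simp add: mult_ZD qof_int_def)

lemma half_integers_in_carrier_ZD:
  "D mod 4 = 1 \<Longrightarrow> a mod 2 = b mod 2 \<Longrightarrow> (of_int a / 2, of_int b / 2) \<in> carrier (ZD D)"
  by (auto simp: carrier_ZD qint_carrier_def)

lemma integers_in_carrier_ZD: "D mod 4 \<noteq> 1 \<Longrightarrow> (of_int a, of_int b) \<in> carrier (ZD D)"
  by (auto simp: carrier_ZD qint_carrier_def)

lemma carrier_ZD_cases:
  assumes "z \<in> carrier (ZD D)"
  obtains a b :: int where "D mod 4 = 1" "a mod 2 = b mod 2" "z = (of_int a / 2, of_int b / 2)"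
  | a b :: int where "D mod 4 \<noteq> 1" "z = (of_int a, of_int b)"
  using assms by (auto simp: carrier_ZD qint_carrier_def split: if_splits)

lemma int_combination_in_carrier_ZD:
  assumes "z \<in> carrier (ZD D)" "w \<in> carrier (ZD D)"
  shows "(of_int k * fst z + of_int l * fst w, of_int k * snd z + of_int l * snd w) \<in> carrier (ZD D)"
  using assms(1)
proof (cases rule: carrier_ZD_cases)
  case (1 a b)
  from assms(2) 1(1) obtain c d :: int
    where cd: "c mod 2 = d mod 2" and w: "w = (of_int c / 2, of_int d / 2)"
    by (cases rule: carrier_ZD_cases) auto
  have "(k * a + l * c) mod 2 = (k * b + l * d) mod 2"
    using 1(2) cd by (metis mod_add_cong mod_mult_right_eq)
  with 1(1) have "(of_int (k * a + l * c) / 2, of_int (k * b + l * d) / 2) \<in> carrier (ZD D)"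
    by (rule half_integers_in_carrier_ZD)
  then show ?thesis using 1(3) w by (simp add: field_simps)
next
  case (2 a b)
  from assms(2) 2(1) obtain c d :: int where w: "w = (of_int c, of_int d)"
    by (cases rule: carrier_ZD_cases) auto
  have "(of_int (k * a + l * c), of_int (k * b + l * d)) \<in> carrier (ZD D)"
    using 2(1) by (rule integers_in_carrier_ZD)
  then show ?thesis using 2(2) w by simp
qed

lemma mult_in_carrier_ZD:
  assumes "z \<in> carrier (ZD D)" "w \<in> carrier (ZD D)"
  shows "z \<otimes>\<^bsub>ZD D\<^esub> w \<in> carrier (ZD D)"
  using assms(1)
proof (cases rule: carrier_ZD_cases)
  case (1 a b)
  from assms(2) 1(1) obtain c d :: int
    where cd: "c mod 2 = d mod 2" and w: "w = (of_int c / 2, of_int d / 2)"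
    by (cases rule: carrier_ZD_cases) auto
  obtain r where r: "a = b + 2 * r"
    using 1(2) by (metis mod_eq_dvd_iff dvd_def diff_add_cancel add.commute)
  obtain s where s: "c = d + 2 * s"
    using cd by (metis mod_eq_dvd_iff dvd_def diff_add_cancel add.commute)
  obtain q where q: "D = 1 + 4 * q"
    using 1(1) by (metis add.commute mod_mult_div_eq)
  define A where "A = b * d + b * s + r * d + 2 * (q * b * d + r * s)"
  define B where "B = b * d + b * s + r * d"
  have "a * c + D * b * d = 2 * A" "a * d + b * c = 2 * B"
    unfolding A_def B_def r s q by (simp_all add: algebra_simps)
  then have "z \<otimes>\<^bsub>ZD D\<^esub> w = (of_int A / 2, of_int B / 2)"
    using 1(3) w by (simp add: mult_ZD field_simps flip: of_int_mult of_int_add)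
  moreover have "A mod 2 = B mod 2"
    unfolding A_def B_def by presburger
  ultimately show ?thesis
    using 1(1) half_integers_in_carrier_ZD by metis
next
  case (2 a b)
  from assms(2) 2(1) obtain c d :: int where w: "w = (of_int c, of_int d)"
    by (cases rule: carrier_ZD_cases) auto
  have "(of_int (a * c + D * b * d), of_int (a * d + b * c)) \<in> carrier (ZD D)"
    using 2(1) by (rule integers_in_carrier_ZD)
  then show ?thesis using 2(2) w by (simp add: mult_ZD)
qed

lemma qconj_in_carrier_ZD:
  assumes "z \<in> carrier (ZD D)"
  shows "qconj z \<in> carrier (ZD D)"
  using assms
proof (cases rule: carrier_ZD_cases)
  case (1 a b)
  then have "(of_int a / 2, of_int (- b) / 2) \<in> carrier (ZD D)"
    by (intro half_integers_in_carrier_ZD) (simp_all add: zmod_zminus1_eq_if)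
  then show ?thesis using 1(3) by (simp add: qconj_def)
next
  case (2 a b)
  then show ?thesis using integers_in_carrier_ZD[of D a "- b"] by (simp add: qconj_def)
qed

lemma qof_int_in_carrier_ZD: "qof_int t \<in> carrier (ZD D)"
  using half_integers_in_carrier_ZD[of D "2 * t" 0] integers_in_carrier_ZD[of D t 0]
  by (cases "D mod 4 = 1") (simp_all add: qof_int_def)

lemma qnorm_in_Ints:
  assumes "z \<in> carrier (ZD D)"
  shows "qnorm D z \<in> \<int>"
  using assms
proof (cases rule: carrier_ZD_cases)
  case (1 a b)
  obtain r where r: "a = b + 2 * r"
    using 1(2) by (metis mod_eq_dvd_iff dvd_def diff_add_cancel add.commute)
  obtain q where q: "D = 1 + 4 * q"
    using 1(1) by (metis add.commute mod_mult_div_eq)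
  define n where "n = r * b + r\<^sup>2 - q * b\<^sup>2"
  have "qnorm D z = of_int (a\<^sup>2 - D * b\<^sup>2) / 4"
    using 1(3) by (simp add: qnorm_def field_simps power2_eq_square)
  also have "a\<^sup>2 - D * b\<^sup>2 = 4 * n"
    unfolding n_def r q by (simp add: algebra_simps power2_eq_square)
  finally have "qnorm D z = of_int n" by simp
  then show ?thesis by simp
next
  case (2 a b)
  then show ?thesis by (simp add: qnorm_def)
qed

lemma qconj_qconj: "qconj (qconj z) = z"
  by (simp add: qconj_def)

lemma qconj_mult_ZD: "qconj (x \<otimes>\<^bsub>ZD D\<^esub> y) = qconj x \<otimes>\<^bsub>ZD D\<^esub> qconj y"
  by (simp add: mult_ZD qconj_def algebra_simps)

lemma qconj_mult_self_ZD: "qconj z \<otimes>\<^bsub>ZD D\<^esub> z = (qnorm D z, 0)"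
  by (simp add: mult_ZD qconj_def qnorm_def power2_eq_square)

lemma qconj_in_Units_ZD:
  assumes "z \<in> Units (ZD D)"
  shows "qconj z \<in> Units (ZD D)"
proof -
  from assms obtain x where z: "z \<in> carrier (ZD D)" and x: "x \<in> carrier (ZD D)"
    and inv: "x \<otimes>\<^bsub>ZD D\<^esub> z = \<one>\<^bsub>ZD D\<^esub>"
    unfolding Units_def by blast
  have "qconj x \<otimes>\<^bsub>ZD D\<^esub> qconj z = qconj (x \<otimes>\<^bsub>ZD D\<^esub> z)"
    by (rule qconj_mult_ZD[symmetric])
  also have "\<dots> = \<one>\<^bsub>ZD D\<^esub>"
    using inv by (simp add: one_ZD qconj_def)
  finally have "qconj x \<otimes>\<^bsub>ZD D\<^esub> qconj z = \<one>\<^bsub>ZD D\<^esub>" .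
  then show ?thesis
    using qconj_in_carrier_ZD[OF z] qconj_in_carrier_ZD[OF x]
    unfolding Units_def by (auto simp: mult_ZD_commute)
qed

lemma PIdl_ZD_iff: "m \<in> PIdl\<^bsub>ZD D\<^esub> (qof_int p) \<longleftrightarrow> (\<exists>x \<in> carrier (ZD D). m = qof_int p \<otimes>\<^bsub>ZD D\<^esub> x)"
  unfolding cgenideal_def by (auto intro: mult_ZD_commute)

lemma mult_in_PIdl_ZD:
  assumes "a \<in> PIdl\<^bsub>ZD D\<^esub> (qof_int p)" "b \<in> carrier (ZD D)"
  shows "b \<otimes>\<^bsub>ZD D\<^esub> a \<in> PIdl\<^bsub>ZD D\<^esub> (qof_int p)"
proof -
  from assms(1) obtain x where x: "x \<in> carrier (ZD D)" and a: "a = qof_int p \<otimes>\<^bsub>ZD D\<^esub> x"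
    by (auto simp: PIdl_ZD_iff)
  have "b \<otimes>\<^bsub>ZD D\<^esub> a = qof_int p \<otimes>\<^bsub>ZD D\<^esub> (b \<otimes>\<^bsub>ZD D\<^esub> x)"
    unfolding a by (metis mult_ZD_assoc mult_ZD_commute)
  then show ?thesis
    using mult_in_carrier_ZD[OF assms(2) x] by (auto simp: PIdl_ZD_iff)
qed

lemma qof_int_in_PIdl_ZD:
  assumes "p dvd s"
  shows "qof_int s \<in> PIdl\<^bsub>ZD D\<^esub> (qof_int p)"
proof -
  from assms obtain k where "s = p * k" by blast
  then have "qof_int s = qof_int p \<otimes>\<^bsub>ZD D\<^esub> qof_int k"
    by (simp add: mult_ZD qof_int_def)
  then show ?thesis using qof_int_in_carrier_ZD by (auto simp: PIdl_ZD_iff)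
qed

lemma qconj_in_PIdl_ZD:
  assumes "a \<in> PIdl\<^bsub>ZD D\<^esub> (qof_int p)"
  shows "qconj a \<in> PIdl\<^bsub>ZD D\<^esub> (qof_int p)"
proof -
  from assms obtain x where x: "x \<in> carrier (ZD D)" and a: "a = qof_int p \<otimes>\<^bsub>ZD D\<^esub> x"
    by (auto simp: PIdl_ZD_iff)
  have "qconj a = qof_int p \<otimes>\<^bsub>ZD D\<^esub> qconj x"
    unfolding a by (simp add: qof_int_mult_ZD qconj_def)
  then show ?thesis using qconj_in_carrier_ZD[OF x] by (auto simp: PIdl_ZD_iff)
qed

lemma bezout_cancel:
  fixes a b p s u v :: "'a :: comm_ring_1"
  assumes "u * p + v * s = 1" "s * a = p * b"
  shows "a = p * (u * a + v * b)"
proof -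
  have "a = (u * p + v * s) * a" using assms(1) by simp
  also have "\<dots> = p * (u * a) + v * (s * a)" by (simp add: algebra_simps)
  also have "\<dots> = p * (u * a + v * b)" unfolding assms(2) by (simp add: algebra_simps)
  finally show ?thesis .
qed

lemma PIdl_ZD_cancel_int:
  fixes p s :: int
  assumes "prime p" "\<not> p dvd s" and m: "m \<in> carrier (ZD D)"
    and sm: "qof_int s \<otimes>\<^bsub>ZD D\<^esub> m \<in> PIdl\<^bsub>ZD D\<^esub> (qof_int p)"
  shows "m \<in> PIdl\<^bsub>ZD D\<^esub> (qof_int p)"
proof -
  have "coprime p s" using assms(1,2) prime_imp_coprime by blast
  then obtain u v where "u * p + v * s = 1"
    using bezout_int[of p s] by (metis coprime_iff_gcd_eq_1)
  then have uv: "of_int u * of_int p + of_int v * of_int s = (1 :: rat)"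
    by (metis of_int_1 of_int_add of_int_mult)
  from sm obtain w where w: "w \<in> carrier (ZD D)" and sw: "qof_int s \<otimes>\<^bsub>ZD D\<^esub> m = qof_int p \<otimes>\<^bsub>ZD D\<^esub> w"
    by (auto simp: PIdl_ZD_iff)
  define y where "y = (of_int u * fst m + of_int v * fst w, of_int u * snd m + of_int v * snd w)"
  have "y \<in> carrier (ZD D)"
    unfolding y_def using int_combination_in_carrier_ZD[OF m w] .
  moreover have "m = qof_int p \<otimes>\<^bsub>ZD D\<^esub> y"
    using sw bezout_cancel[OF uv] by (simp add: qof_int_mult_ZD y_def prod_eq_iff)
  ultimately show ?thesis by (auto simp: PIdl_ZD_iff)
qed

lemma IpE:
  assumes "z \<in> Ip D p"
  obtains m where "z \<in> carrier (ZD D)" "z \<notin> Units (ZD D)" "z \<notin> PIdl\<^bsub>ZD D\<^esub> (qof_int p)"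
    "m \<in> carrier (ZD D)" "m \<notin> PIdl\<^bsub>ZD D\<^esub> (qof_int p)"
    "z \<otimes>\<^bsub>ZD D\<^esub> m \<in> PIdl\<^bsub>ZD D\<^esub> (qof_int p)"
  using assms unfolding Ip_def by blast

lemma qnorm_of_Ip_multiple:
  fixes p :: int
  assumes "prime p" "z \<in> Ip D p"
  shows "\<exists>k :: int. qnorm D z = of_int (p * k)"
proof -
  from assms(2) obtain m where z: "z \<in> carrier (ZD D)" and m: "m \<in> carrier (ZD D)"
    "m \<notin> PIdl\<^bsub>ZD D\<^esub> (qof_int p)" and zm: "z \<otimes>\<^bsub>ZD D\<^esub> m \<in> PIdl\<^bsub>ZD D\<^esub> (qof_int p)"
    by (rule IpE)
  obtain n where n: "qnorm D z = of_int n"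
    using qnorm_in_Ints[OF z] by (auto elim: Ints_cases)
  have "qconj z \<otimes>\<^bsub>ZD D\<^esub> (z \<otimes>\<^bsub>ZD D\<^esub> m) = qof_int n \<otimes>\<^bsub>ZD D\<^esub> m"
    by (metis mult_ZD_assoc qconj_mult_self_ZD n qof_int_def)
  then have "qof_int n \<otimes>\<^bsub>ZD D\<^esub> m \<in> PIdl\<^bsub>ZD D\<^esub> (qof_int p)"
    using mult_in_PIdl_ZD[OF zm qconj_in_carrier_ZD[OF z]] by simp
  then have "p dvd n"
    using PIdl_ZD_cancel_int[OF assms(1) _ m(1)] m(2) by blast
  then show ?thesis using n by (auto elim: dvdE)
qed

lemma qconj_in_Ip:
  assumes "z \<in> Ip D p"
  shows "qconj z \<in> Ip D p"
proof -
  from assms obtain m where z: "z \<in> carrier (ZD D)" and "z \<notin> Units (ZD D)"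
    and "z \<notin> PIdl\<^bsub>ZD D\<^esub> (qof_int p)" and m: "m \<in> carrier (ZD D)"
    and "m \<notin> PIdl\<^bsub>ZD D\<^esub> (qof_int p)" and zm: "z \<otimes>\<^bsub>ZD D\<^esub> m \<in> PIdl\<^bsub>ZD D\<^esub> (qof_int p)"
    by (rule IpE)
  moreover have "qconj x \<notin> PIdl\<^bsub>ZD D\<^esub> (qof_int p)" if "x \<notin> PIdl\<^bsub>ZD D\<^esub> (qof_int p)" for x
    using qconj_in_PIdl_ZD[of "qconj x"] that by (auto simp: qconj_qconj)
  moreover have "qconj z \<notin> Units (ZD D)"
    using qconj_in_Units_ZD[of "qconj z"] \<open>z \<notin> Units (ZD D)\<close> by (auto simp: qconj_qconj)
  moreover have "qconj z \<otimes>\<^bsub>ZD D\<^esub> qconj m \<in> PIdl\<^bsub>ZD D\<^esub> (qof_int p)"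
    using qconj_in_PIdl_ZD[OF zm] by (simp add: qconj_mult_ZD)
  ultimately show ?thesis
    unfolding Ip_def using qconj_in_carrier_ZD by blast
qed

lemma qof_int_notin_Ip:
  fixes p s :: int
  assumes "prime p"
  shows "qof_int s \<notin> Ip D p"
proof
  assume "qof_int s \<in> Ip D p"
  then obtain m where "qof_int s \<notin> PIdl\<^bsub>ZD D\<^esub> (qof_int p)" "m \<in> carrier (ZD D)"
    "m \<notin> PIdl\<^bsub>ZD D\<^esub> (qof_int p)" "qof_int s \<otimes>\<^bsub>ZD D\<^esub> m \<in> PIdl\<^bsub>ZD D\<^esub> (qof_int p)"
    by (rule IpE)
  then show False
    using PIdl_ZD_cancel_int[OF assms] qof_int_in_PIdl_ZD by blast
qed

lemma Units_cancel_PIdl_ZD: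
  assumes "u \<in> Units (ZD D)" "m \<in> carrier (ZD D)"
    and "u \<otimes>\<^bsub>ZD D\<^esub> m \<in> PIdl\<^bsub>ZD D\<^esub> (qof_int p)"
  shows "m \<in> PIdl\<^bsub>ZD D\<^esub> (qof_int p)"
proof -
  from assms(1) obtain v where v: "v \<in> carrier (ZD D)" "v \<otimes>\<^bsub>ZD D\<^esub> u = \<one>\<^bsub>ZD D\<^esub>"
    unfolding Units_def by blast
  have "m = v \<otimes>\<^bsub>ZD D\<^esub> (u \<otimes>\<^bsub>ZD D\<^esub> m)"
    by (simp add: mult_ZD_assoc[symmetric] v(2) one_mult_ZD)
  then show ?thesis using mult_in_PIdl_ZD[OF assms(3) v(1)] by simp
qed

lemma qof_int_mult_Units_notin_Ip:
  fixes p t :: int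
  assumes "prime p" and u: "u \<in> Units (ZD D)"
  shows "qof_int t \<otimes>\<^bsub>ZD D\<^esub> u \<notin> Ip D p"
proof
  assume "qof_int t \<otimes>\<^bsub>ZD D\<^esub> u \<in> Ip D p"
  then obtain m where tu: "qof_int t \<otimes>\<^bsub>ZD D\<^esub> u \<notin> PIdl\<^bsub>ZD D\<^esub> (qof_int p)"
    and m: "m \<in> carrier (ZD D)" "m \<notin> PIdl\<^bsub>ZD D\<^esub> (qof_int p)"
    and tum: "(qof_int t \<otimes>\<^bsub>ZD D\<^esub> u) \<otimes>\<^bsub>ZD D\<^esub> m \<in> PIdl\<^bsub>ZD D\<^esub> (qof_int p)"
    by (rule IpE)
  have u_carrier: "u \<in> carrier (ZD D)" using u by (simp add: Units_def)
  have "\<not> p dvd t"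
    using tu mult_in_PIdl_ZD[OF qof_int_in_PIdl_ZD u_carrier] by (auto simp: mult_ZD_commute)
  then have "u \<otimes>\<^bsub>ZD D\<^esub> m \<in> PIdl\<^bsub>ZD D\<^esub> (qof_int p)"
    using PIdl_ZD_cancel_int[OF assms(1)] tum mult_in_carrier_ZD[OF u_carrier m(1)]
    by (simp add: mult_ZD_assoc)
  then show False using Units_cancel_PIdl_ZD[OF u m(1)] m(2) by blast
qed

theorem proposition2p2:
  fixes D p :: int
  assumes "squarefree D" and "D \<noteq> 1"
    and "Factorial_Ring.prime p"
    and "ring_irreducible\<^bsub>ZD D\<^esub> (qof_int p)"
    and "\<not> ring_prime\<^bsub>ZD D\<^esub> (qof_int p)"
  shows "(\<forall>z \<in> Ip D p. (\<exists>k :: int. qnorm D z = of_int (p * k)) \<and> qconj z \<in> Ip D p)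
       \<and> (\<forall>t :: int. (range qof_int \<union> Units (ZD D)
              \<union> {qof_int t \<otimes>\<^bsub>ZD D\<^esub> u | u. u \<in> Units (ZD D)}) \<inter> Ip D p = {})"
proof (intro conjI ballI allI)
  fix z assume "z \<in> Ip D p"
  then show "\<exists>k :: int. qnorm D z = of_int (p * k)" and "qconj z \<in> Ip D p"
    using qnorm_of_Ip_multiple[OF assms(3)] qconj_in_Ip by blast+
next
  fix t :: int
  have "Units (ZD D) \<inter> Ip D p = {}" unfolding Ip_def by blast
  then show "(range qof_int \<union> Units (ZD D)
              \<union> {qof_int t \<otimes>\<^bsub>ZD D\<^esub> u | u. u \<in> Units (ZD D)}) \<inter> Ip D p = {}"
    using qof_int_notin_Ip[OF assms(3)] qof_int_mult_Units_notin_Ip[OF assms(3)] by blast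
qed

end
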